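(* Assume (A1)–(A3) hold and let $\{x_k\}$ be an infinite sequence generated by LMLS. Then for all $k\ge0$: (i) $\{D_k\}$ is convergent and $\lim_{k\to\infty}D_k=\lim_{k\to\infty}\psi(x_k)$; (ii) $\nabla\psi(x_k)^Td_k\le -c_1\|\nabla\psi(x_k)\|^2$, where $c_1:=(L_0^2+\overline{\mu})^{-1}$ and $\overline{\mu}:=(\xi_{\max}+\omega_{\max}L_0^{\eta})\|h(x_0)\|^{\eta}$; (iii) LMLS either stops after finitely many iterations at an $x_k$ with $\|h(x_k)\|\le\varepsilon$ or $\|\nabla\psi(x_k)\|\le\varepsilon$, or generates an infinite sequence $\{x_k\}$ with $\lim_{k\to\infty}\|\nabla\psi(x_k)\|=0$, so that every accumulation point of $\{x_k\}$ is a stationary point of $\psi$.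
   Context: Let $h:\mathbb{R}^m\to\mathbb{R}^n$ be continuously differentiable; $\nabla h(x)\in\mathbb{R}^{m\times n}$ denotes the transposed Jacobian, $\|\cdot\|$ the Euclidean norm (operator norm for matrices), $\psi(x):=\frac12\|h(x)\|^2$, so $\nabla\psi(x)=\nabla h(x)h(x)$; $\Omega:=\{x:h(x)=0\}\neq\emptyset$; $\mathcal{L}(x_0):=\{x:\psi(x)\le\psi(x_0)\}$. Assumptions: (A1) for some $x^*\in\Omega$ there are $\delta\in\,]0,1]$, $\beta>0$, $\mathtt r\in\,]0,1[$ with $\beta\,\mathrm{dist}(x,\Omega)\le\|h(x)\|^\delta$ whenever $\|x-x^*\|\le\mathtt r$. (A2) $\mathcal{L}(x_0)$ is bounded. (A3) $\|\nabla h(x)-\nabla h(y)\|\le L\|x-y\|$ for all $x,y$. $L_0>0$ is a constant with $\|\nabla h(x)\|\le L_0$ on $\mathcal{L}(x_0)$. Algorithm LMLS: parameters $x_0$, $\varepsilon>0$, $\overline{\alpha}>0$, $\rho,\sigma\in\,]0,1[$, $\eta\in\,]0,4\delta[$, $0\le\xi_{\min}\le\xi_{\max}$, $0\le\omega_{\min}\le\omega_{\max}$ with $\xi_{\min}+\omega_{\min}>0$, $0\le\theta_{\min}\le\theta_{\max}<1$, sequences $\xi_k\in[\xi_{\min},\xi_{\max}]$, $\omega_k\in[\omega_{\min},\omega_{\max}]$, $\theta_k\in[\theta_{\min},\theta_{\max}]$; $D_0:=\psi(x_0)$. At iteration $k$: stop if $\|h(x_k)\|\le\varepsilon$ or $\|\nabla\psi(x_k)\|\le\varepsilon$;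 otherwise $\mu_k:=\xi_k\|h(x_k)\|^\eta+\omega_k\|\nabla h(x_k)h(x_k)\|^\eta$, $d_k$ solves $(\nabla h(x_k)\nabla h(x_k)^T+\mu_kI)d=-\nabla h(x_k)h(x_k)$, $\alpha_k:=\rho^{\ell_k}\overline{\alpha}$ with $\ell_k$ the smallest integer $\ell\ge0$ such that $\psi(x_k+\rho^\ell\overline{\alpha}d_k)\le D_k+\sigma\rho^\ell\overline{\alpha}\nabla\psi(x_k)^Td_k$, $x_{k+1}:=x_k+\alpha_kd_k$, $D_{k+1}:=(1-\theta_k)\psi(x_{k+1})+\theta_kD_k$. *)

theory Defs
  imports "HOL-Analysis.Analysis"
begin

definition mnorm :: "real^'a^'b \<Rightarrow> real" where
  "mnorm A = onorm (\<lambda>v. A *v v)"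

text \<open>Transposed Jacobian: nabla h(x) is the m x n matrix transpose (J x), where J x is the
  n x m Jacobian of h at x.\<close>
definition gradh :: "(real^'m::finite \<Rightarrow> real^'m^'n::finite) \<Rightarrow> real^'m \<Rightarrow> real^'n^'m" where
  "gradh J x = transpose (J x)"

definition psi :: "(real^'m \<Rightarrow> real^'n) \<Rightarrow> real^'m \<Rightarrow> real" where
  "psi h x = (1/2) * (norm (h x))^2"

definition gradpsi :: "(real^'m::finite \<Rightarrow> real^'n::finite) \<Rightarrow> (real^'m \<Rightarrow> real^'m^'n) \<Rightarrow> real^'m \<Rightarrow> real^'m" where
  "gradpsi h J x = gradh J x *v h x"

end

theory Submission
  imports Defs
begin

text \<open>
  The Levenberg-Marquardt direction solves (A A^T + mu I) d = -g with A = nabla h(x_k) and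
  g = nabla psi(x_k); writing g = -(A w + mu d) with w = A^T d gives
  g.d <= -|g|^2 / (|A|^2 + mu) and mu |d| <= |g|. The nonmonotone Armijo rule keeps
  psi(x_k) <= D_k <= psi(x_0), so the iterates stay in the bounded level set, where |A| <= L0
  and mu_k <= mu-bar; this is (ii). The reference values D_k decrease and are bounded below,
  and D_k - psi(x_(k+1)) = (D_k - D_(k+1)) / (1 - theta_k) tends to 0; this is (i).
  The decreases of D_k are summable, so alpha_k g_k.d_k tends to 0. As long as
  g_k.d_k <= -c < 0 the step alpha_k stays bounded away from 0: by the mean value theorem the
  rejected trial step alpha_k / rho produces a point of the segment where the directional
  derivative exceeds g_k.d_k by (1 - sigma) c, which uniform continuity of nabla psi on a
  compact set containing all iterates and trial points rules out for short steps. Hence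
  g_k.d_k tends to 0, so |nabla psi(x_k)| tends to 0 by (ii), and (iii) follows by continuity.
\<close>

section \<open>Armijo backtracking along a line\<close>

lemma has_real_derivative_along_line:
  fixes f :: "'a::real_inner \<Rightarrow> real"
  assumes gradient: "\<And>z. (f has_derivative (\<lambda>v. G z \<bullet> v)) (at z)"
  shows "((\<lambda>s. f (x + s *\<^sub>R d)) has_real_derivative G (x + s *\<^sub>R d) \<bullet> d) (at s)"
proof -
  have "((\<lambda>s. x + s *\<^sub>R d) has_derivative (\<lambda>t. t *\<^sub>R d)) (at s)"
    by (auto intro!: derivative_eq_intros)
  from has_derivative_compose[OF this gradient]
  show ?thesis
    unfolding has_field_derivative_def by (rule has_derivative_eq_rhs) (auto simp: fun_eq_iff)
qed

lemma mvt_along_line: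
  fixes f :: "'a::real_inner \<Rightarrow> real"
  assumes gradient: "\<And>z. (f has_derivative (\<lambda>v. G z \<bullet> v)) (at z)" and "0 < t"
  obtains z where "0 < z" "z < t" "f (x + t *\<^sub>R d) - f x = t * (G (x + z *\<^sub>R d) \<bullet> d)"
proof -
  have "\<exists>z>0. z < t \<and> f (x + t *\<^sub>R d) - f (x + 0 *\<^sub>R d) = (t - 0) * (G (x + z *\<^sub>R d) \<bullet> d)"
    by (rule MVT2[OF \<open>0 < t\<close>]) (rule has_real_derivative_along_line[OF gradient])
  with that show thesis
    by auto
qed

lemma armijo_rejection_gradient_gap:
  fixes f :: "'a::real_inner \<Rightarrow> real" and sigma :: real
  assumes gradient: "\<And>z. (f has_derivative (\<lambda>v. G z \<bullet> v)) (at z)"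
    and "0 < t" and "f x \<le> R"
    and rejected: "R + sigma * t * (G x \<bullet> d) < f (x + t *\<^sub>R d)"
  obtains z where "0 < z" "z < t" "(1 - sigma) * - (G x \<bullet> d) < (G (x + z *\<^sub>R d) - G x) \<bullet> d"
proof -
  obtain z where z: "0 < z" "z < t" "f (x + t *\<^sub>R d) - f x = t * (G (x + z *\<^sub>R d) \<bullet> d)"
    using mvt_along_line[OF gradient \<open>0 < t\<close>] .
  with rejected \<open>f x \<le> R\<close> have "sigma * t * (G x \<bullet> d) < t * (G (x + z *\<^sub>R d) \<bullet> d)"
    by linarith
  with \<open>0 < t\<close> have "sigma * (G x \<bullet> d) < G (x + z *\<^sub>R d) \<bullet> d"
    by (simp add: mult.commute[of sigma t] mult.assoc)
  with z show thesis
    by (intro that) (simp_all add: inner_diff_left algebra_simps)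
qed

lemma armijo_backtracking_terminates:
  fixes f :: "'a::real_inner \<Rightarrow> real" and sigma :: real
  assumes gradient: "\<And>z. (f has_derivative (\<lambda>v. G z \<bullet> v)) (at z)"
    and "isCont G x" and "G x \<bullet> d < 0" and "sigma < 1" and "0 < rho" "rho < 1" "0 < abar"
    and "f x \<le> R"
  shows "\<exists>l. f (x + (rho ^ l * abar) *\<^sub>R d) \<le> R + sigma * rho ^ l * abar * (G x \<bullet> d)"
proof (rule ccontr)
  assume rejected: "\<nexists>l. f (x + (rho ^ l * abar) *\<^sub>R d) \<le> R + sigma * rho ^ l * abar * (G x \<bullet> d)"
  have "((\<lambda>s. (G (x + s *\<^sub>R d) - G x) \<bullet> d) \<longlongrightarrow> (G x - G x) \<bullet> d) (at_right 0)"
    by (intro tendsto_intros isCont_tendsto_compose[OF \<open>isCont G x\<close>])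
      (auto intro!: tendsto_eq_intros)
  then have "((\<lambda>s. (G (x + s *\<^sub>R d) - G x) \<bullet> d) \<longlongrightarrow> 0) (at_right 0)"
    by simp
  moreover have "0 < (1 - sigma) * - (G x \<bullet> d)"
    using assms by (intro mult_pos_pos) auto
  ultimately have "\<forall>\<^sub>F s in at_right 0. (G (x + s *\<^sub>R d) - G x) \<bullet> d < (1 - sigma) * - (G x \<bullet> d)"
    by (rule order_tendstoD(2))
  then obtain b where "0 < b"
    and small: "\<And>s. 0 < s \<Longrightarrow> s < b \<Longrightarrow> (G (x + s *\<^sub>R d) - G x) \<bullet> d < (1 - sigma) * - (G x \<bullet> d)"
    unfolding eventually_at_right_field by auto
  obtain l where "rho ^ l < b / abar"
    using real_arch_pow_inv[of "b / abar" rho] assms \<open>0 < b\<close> by auto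
  then have "rho ^ l * abar < b"
    using \<open>0 < abar\<close> by (simp add: field_simps)
  have "0 < rho ^ l * abar"
    using \<open>0 < rho\<close> \<open>0 < abar\<close> by simp
  moreover have "R + sigma * (rho ^ l * abar) * (G x \<bullet> d) < f (x + (rho ^ l * abar) *\<^sub>R d)"
    using rejected by (simp only: mult.assoc) (meson not_le)
  ultimately obtain z where z: "0 < z" "z < rho ^ l * abar"
      "(1 - sigma) * - (G x \<bullet> d) < (G (x + z *\<^sub>R d) - G x) \<bullet> d"
    using armijo_rejection_gradient_gap[OF gradient _ \<open>f x \<le> R\<close>] by blast
  with \<open>rho ^ l * abar < b\<close> have "z < b"
    by linarith
  with small[OF z(1)] z(3) show False
    by linarith
qed

section \<open>Levenberg-Marquardt directions\<close>

lemma mnorm_nonneg: "0 \<le> mnorm (A :: real^'n::finite^'m::finite)"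
  unfolding mnorm_def by (rule onorm_pos_le) (simp add: linear_conv_bounded_linear)

lemma norm_matrix_vector_mult_le_mnorm:
  "norm (A *v v) \<le> mnorm (A :: real^'n::finite^'m::finite) * norm v"
  unfolding mnorm_def by (rule onorm) (simp add: linear_conv_bounded_linear)

lemma mat_matrix_vector_mult: "(mat c :: 'a::semiring_1^'n^'n) *v v = c *s v"
  by (simp add: vec_eq_iff matrix_vector_mult_def mat_def if_distrib if_distribR
      cong del: if_weak_cong)

lemma inner_matrix_vector_mult_transpose: "(A *v w) \<bullet> v = w \<bullet> (transpose A *v v)"
  for A :: "real^'n::finite^'m::finite"
  by (metis dot_lmul_matrix inner_commute transpose_matrix_vector)

context
  fixes A :: "real^'n::finite^'m::finite" and d g :: "real^'m" and mu :: real
  assumes lm_system: "(A ** transpose A + mat mu) *v d = - g"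
begin

lemma lm_system_eq: "g = - (A *v (transpose A *v d)) - mu *\<^sub>R d"
  using lm_system
  by (simp add: matrix_vector_mul_assoc[symmetric] mat_matrix_vector_mult scalar_mult_eq_scaleR
      eq_neg_iff_add_eq_0 algebra_simps)

lemma lm_direction_inner: "g \<bullet> d = - ((norm (transpose A *v d))\<^sup>2 + mu * (norm d)\<^sup>2)"
  by (simp add: lm_system_eq inner_diff_left inner_matrix_vector_mult_transpose
      power2_norm_eq_inner)

lemma lm_direction_norm_le:
  assumes "0 < mu"
  shows "mu * norm d \<le> norm g"
proof -
  have "mu * (norm d)\<^sup>2 \<le> - (g \<bullet> d)"
    by (simp add: lm_direction_inner)
  also have "\<dots> \<le> norm g * norm d"
    using norm_cauchy_schwarz[of "- g" d] by simp
  finally show ?thesis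
    by (cases "norm d = 0") (auto simp: power2_eq_square)
qed

lemma lm_direction_descent:
  assumes "0 < mu"
  shows "g \<bullet> d \<le> - ((norm g)\<^sup>2 / ((mnorm A)\<^sup>2 + mu))"
proof -
  define w where "w = transpose A *v d"
  define M where "M = mnorm A"
  have Aw_d: "(A *v w) \<bullet> d = (norm w)\<^sup>2"
    by (simp add: w_def inner_matrix_vector_mult_transpose power2_norm_eq_inner)
  have norm_Aw: "norm (A *v w) \<le> M * norm w"
    unfolding M_def by (rule norm_matrix_vector_mult_le_mnorm)
  have "(norm w)\<^sup>2 \<le> norm (A *v w) * norm d"
    using norm_cauchy_schwarz[of "A *v w" d] by (simp add: Aw_d)
  also have "\<dots> \<le> M * norm w * norm d"
    using norm_Aw by (simp add: mult_right_mono)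
  finally have "norm w \<le> M * norm d"
    using mnorm_nonneg[of A] unfolding M_def
    by (cases "norm w = 0") (auto simp: power2_eq_square mult.assoc)
  then have w_bound: "(norm w)\<^sup>2 \<le> M\<^sup>2 * (norm d)\<^sup>2"
    by (metis norm_ge_zero power_mono power_mult_distrib)
  have Aw_bound: "(norm (A *v w))\<^sup>2 \<le> M\<^sup>2 * (norm w)\<^sup>2"
    using norm_Aw by (metis norm_ge_zero power_mono power_mult_distrib)
  have "(norm g)\<^sup>2 = (norm (A *v w))\<^sup>2 + 2 * mu * ((A *v w) \<bullet> d) + mu\<^sup>2 * (norm d)\<^sup>2"
    unfolding lm_system_eq w_def[symmetric] power2_norm_eq_inner
    by (simp add: inner_commute algebra_simps power2_eq_square)
  also have "\<dots> \<le> (M\<^sup>2 + mu) * ((norm w)\<^sup>2 + mu * (norm d)\<^sup>2)"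
    using Aw_bound mult_left_mono[OF w_bound, of mu] \<open>0 < mu\<close>
    unfolding Aw_d by (simp only: ring_distribs power2_eq_square mult_ac) linarith
  also have "\<dots> = (M\<^sup>2 + mu) * - (g \<bullet> d)"
    by (simp add: lm_direction_inner w_def)
  finally have "(norm g)\<^sup>2 \<le> (M\<^sup>2 + mu) * - (g \<bullet> d)" .
  moreover have "0 < M\<^sup>2 + mu"
    using \<open>0 < mu\<close> by (simp add: add_nonneg_pos)
  ultimately show ?thesis
    unfolding M_def by (simp add: field_simps)
qed

end

lemma psi_has_gradient:
  assumes "\<And>z. (h has_derivative (\<lambda>v. J z *v v)) (at z)"
  shows "(psi h has_derivative (\<lambda>v. gradpsi h J z \<bullet> v)) (at z)"
proof -
  have "psi h = (\<lambda>z. (1/2) * (h z \<bullet> h z))"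
    by (simp add: fun_eq_iff psi_def power2_norm_eq_inner)
  moreover have "((\<lambda>z. (1/2) * (h z \<bullet> h z)) has_derivative
      (\<lambda>v. (1/2) * (h z \<bullet> (J z *v v) + (J z *v v) \<bullet> h z))) (at z)"
    by (intro derivative_intros assms)
  moreover have "(1/2) * (h z \<bullet> (J z *v v) + (J z *v v) \<bullet> h z) = gradpsi h J z \<bullet> v" for v
    using inner_matrix_vector_mult_transpose[of "J z" v "h z"]
    by (simp add: gradpsi_def gradh_def inner_commute)
  ultimately show ?thesis
    by simp
qed

lemma continuous_on_gradpsi:
  assumes "\<And>z. (h has_derivative (\<lambda>v. J z *v v)) (at z)" and "continuous_on UNIV J"
  shows "continuous_on UNIV (gradpsi h J)"
proof -
  have "continuous_on UNIV h"
    using assms(1) has_derivative_continuous continuous_at_imp_continuous_on by blast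
  then have "continuous_on UNIV (\<lambda>z. \<chi> j. \<Sum>i\<in>UNIV. h z $ i * J z $ i $ j)"
    by (intro continuous_on_vec_lambda continuous_on_sum continuous_on_mult
        continuous_on_component assms(2))
  then show ?thesis
    by (simp add: gradpsi_def gradh_def vector_matrix_mult_def)
qed

lemma norm_gradpsi_le: "norm (gradpsi h J z) \<le> mnorm (gradh J z) * norm (h z)"
  unfolding gradpsi_def by (rule norm_matrix_vector_mult_le_mnorm)

lemma psi_bdd_below: "bdd_below (range (psi h))"
  by (auto simp: bdd_below_def psi_def intro!: exI[of _ 0])

section \<open>Nonmonotone Armijo line search\<close>

locale nonmonotone_armijo_search =
  fixes f :: "'a::euclidean_space \<Rightarrow> real" and G :: "'a \<Rightarrow> 'a"
    and stopped :: "nat \<Rightarrow> bool"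
    and x d :: "nat \<Rightarrow> 'a" and D alpha theta :: "nat \<Rightarrow> real"
    and abar rho sigma theta_max :: real
  assumes has_gradient: "\<And>z. (f has_derivative (\<lambda>v. G z \<bullet> v)) (at z)"
    and continuous_gradient: "continuous_on UNIV G"
    and abar_pos: "0 < abar" and rho_bounds: "0 < rho" "rho < 1"
    and sigma_bounds: "0 < sigma" "sigma < 1"
    and theta_bounds: "\<And>k. 0 \<le> theta k \<and> theta k \<le> theta_max" "theta_max < 1"
    and descent: "\<And>k. (\<forall>j\<le>k. \<not> stopped j) \<Longrightarrow> G (x k) \<bullet> d k < 0"
    and reference_0: "D 0 = f (x 0)"
    and iteration: "\<And>k. (\<forall>j\<le>k. \<not> stopped j) \<Longrightarrow>
        alpha k = rho ^ (LEAST l. f (x k + (rho ^ l * abar) *\<^sub>R d k)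
                          \<le> D k + sigma * rho ^ l * abar * (G (x k) \<bullet> d k)) * abar
      \<and> x (Suc k) = x k + alpha k *\<^sub>R d k
      \<and> D (Suc k) = (1 - theta k) * f (x (Suc k)) + theta k * D k"
begin

abbreviation running :: "nat \<Rightarrow> bool" where
  "running k \<equiv> \<forall>j\<le>k. \<not> stopped j"

definition accepted :: "nat \<Rightarrow> real \<Rightarrow> bool" where
  "accepted k t \<longleftrightarrow> f (x k + t *\<^sub>R d k) \<le> D k + sigma * t * (G (x k) \<bullet> d k)"

definition backtracks :: "nat \<Rightarrow> nat" where
  "backtracks k = (LEAST l. accepted k (rho ^ l * abar))"

lemma alpha_eq: "running k \<Longrightarrow> alpha k = rho ^ backtracks k * abar"
  using iteration[of k] by (simp add: backtracks_def accepted_def mult.assoc)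

lemma x_Suc: "running k \<Longrightarrow> x (Suc k) = x k + alpha k *\<^sub>R d k"
  using iteration by blast

lemma reference_Suc: "running k \<Longrightarrow> D (Suc k) = (1 - theta k) * f (x (Suc k)) + theta k * D k"
  using iteration by blast

lemma alpha_pos: "running k \<Longrightarrow> 0 < alpha k"
  using alpha_eq rho_bounds abar_pos by simp

lemma step_accepted_if_merit_le_reference:
  assumes "running k" and "f (x k) \<le> D k"
  shows "f (x (Suc k)) \<le> D k + sigma * alpha k * (G (x k) \<bullet> d k)"
proof -
  have "\<exists>l. accepted k (rho ^ l * abar)"
    using armijo_backtracking_terminates[OF has_gradient _ descent[OF \<open>running k\<close>]]
      continuous_gradient assms rho_bounds sigma_bounds abar_pos
    by (simp add: accepted_def continuous_on_eq_continuous_at mult.assoc)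
  then have "accepted k (alpha k)"
    unfolding alpha_eq[OF \<open>running k\<close>] backtracks_def by (rule LeastI_ex)
  then show ?thesis
    using x_Suc[OF \<open>running k\<close>] by (simp add: accepted_def)
qed

lemma armijo_term_nonpos:
  assumes "running k"
  shows "sigma * alpha k * (G (x k) \<bullet> d k) \<le> 0"
  using alpha_pos[OF assms] descent[OF assms] sigma_bounds by (simp add: mult_nonneg_nonpos)

lemma merit_le_reference: "(\<forall>j<k. \<not> stopped j) \<Longrightarrow> f (x k) \<le> D k"
proof (induction k)
  case 0
  then show ?case by (simp add: reference_0)
next
  case (Suc k)
  then have "running k"
    by auto
  moreover have "f (x k) \<le> D k"
    using Suc by simp
  ultimately have "f (x (Suc k)) \<le> D k + sigma * alpha k * (G (x k) \<bullet> d k)"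
    by (rule step_accepted_if_merit_le_reference)
  then have "f (x (Suc k)) \<le> D k"
    using armijo_term_nonpos[OF \<open>running k\<close>] by linarith
  then have "theta k * f (x (Suc k)) \<le> theta k * D k"
    using theta_bounds(1)[of k] by (simp add: mult_left_mono)
  then show ?case
    using reference_Suc[OF \<open>running k\<close>] by (simp add: algebra_simps)
qed

lemma step_accepted:
  "running k \<Longrightarrow> f (x (Suc k)) \<le> D k + sigma * alpha k * (G (x k) \<bullet> d k)"
  using step_accepted_if_merit_le_reference merit_le_reference by simp

lemma reference_decrease:
  assumes "running k"
  shows "(1 - theta_max) * (D k - f (x (Suc k))) \<le> D k - D (Suc k)"
    and "(1 - theta_max) * (sigma * alpha k * - (G (x k) \<bullet> d k)) \<le> D k - D (Suc k)"
proof -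
  have gap: "sigma * alpha k * - (G (x k) \<bullet> d k) \<le> D k - f (x (Suc k))"
    using step_accepted[OF assms] by simp
  have "D k - D (Suc k) = (1 - theta k) * (D k - f (x (Suc k)))"
    using reference_Suc[OF assms] by (simp add: algebra_simps)
  moreover have "(1 - theta_max) * (D k - f (x (Suc k))) \<le> (1 - theta k) * (D k - f (x (Suc k)))"
    using gap armijo_term_nonpos[OF assms] theta_bounds(1)[of k] by (intro mult_right_mono) auto
  ultimately show "(1 - theta_max) * (D k - f (x (Suc k))) \<le> D k - D (Suc k)"
    by simp
  moreover have "(1 - theta_max) * (sigma * alpha k * - (G (x k) \<bullet> d k))
      \<le> (1 - theta_max) * (D k - f (x (Suc k)))"
    using gap theta_bounds(2) by (intro mult_left_mono) auto
  ultimately show "(1 - theta_max) * (sigma * alpha k * - (G (x k) \<bullet> d k)) \<le> D k - D (Suc k)"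
    by linarith
qed

lemma reference_antimono:
  assumes "running k"
  shows "D (Suc k) \<le> D k"
proof -
  have "0 \<le> (1 - theta_max) * (sigma * alpha k * - (G (x k) \<bullet> d k))"
    using armijo_term_nonpos[OF assms] theta_bounds(2) by (simp add: mult_nonneg_nonpos)
  with reference_decrease(2)[OF assms] show ?thesis
    by linarith
qed

lemma reference_le_initial: "(\<forall>j<k. \<not> stopped j) \<Longrightarrow> D k \<le> f (x 0)"
proof (induction k)
  case 0
  then show ?case by (simp add: reference_0)
next
  case (Suc k)
  then show ?case
    using reference_antimono[of k] by fastforce
qed

lemma merit_le_initial:
  assumes "\<forall>j<k. \<not> stopped j"
  shows "f (x k) \<le> f (x 0)"
  using merit_le_reference[OF assms] reference_le_initial[OF assms] by linarith

lemma rejected_trial_gradient_gap: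
  assumes "running k" and "alpha k < abar"
  obtains z where "0 < z" "z < alpha k / rho" "alpha k / rho \<le> abar"
    "(1 - sigma) * - (G (x k) \<bullet> d k) < (G (x k + z *\<^sub>R d k) - G (x k)) \<bullet> d k"
proof -
  have "backtracks k \<noteq> 0"
    using assms alpha_eq[OF \<open>running k\<close>] by (metis mult_1 power_0 order.irrefl)
  then have "\<not> accepted k (rho ^ (backtracks k - 1) * abar)"
    unfolding backtracks_def by (intro not_less_Least) auto
  moreover have t: "alpha k / rho = rho ^ (backtracks k - 1) * abar"
    using alpha_eq[OF \<open>running k\<close>] \<open>backtracks k \<noteq> 0\<close> rho_bounds
    by (cases "backtracks k") auto
  ultimately have rejected:
      "D k + sigma * (alpha k / rho) * (G (x k) \<bullet> d k) < f (x k + (alpha k / rho) *\<^sub>R d k)"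
    by (simp add: accepted_def)
  have "0 < alpha k / rho"
    using alpha_pos[OF \<open>running k\<close>] rho_bounds by simp
  moreover have "f (x k) \<le> D k"
    using merit_le_reference \<open>running k\<close> by simp
  moreover have "alpha k / rho \<le> abar"
    unfolding t using rho_bounds abar_pos by (simp add: power_le_one)
  ultimately show thesis
    using armijo_rejection_gradient_gap[OF has_gradient _ _ rejected] that by blast
qed

lemma rejected_trial_gradient_variation:
  assumes "running k" and "alpha k < abar" and "G (x k) \<bullet> d k \<le> - c"
  obtains y where "norm (y - x k) \<le> alpha k / rho * norm (d k)" "norm (y - x k) \<le> abar * norm (d k)"
    "(1 - sigma) * c < norm (G y - G (x k)) * norm (d k)"
proof -
  obtain z where z: "0 < z" "z < alpha k / rho" "alpha k / rho \<le> abar"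
      and gap: "(1 - sigma) * - (G (x k) \<bullet> d k) < (G (x k + z *\<^sub>R d k) - G (x k)) \<bullet> d k"
    using rejected_trial_gradient_gap[OF assms(1,2)] by blast
  have "(1 - sigma) * c \<le> (1 - sigma) * - (G (x k) \<bullet> d k)"
    using assms(3) sigma_bounds by (intro mult_left_mono) auto
  also note gap
  also have "(G (x k + z *\<^sub>R d k) - G (x k)) \<bullet> d k
      \<le> norm (G (x k + z *\<^sub>R d k) - G (x k)) * norm (d k)"
    by (rule norm_cauchy_schwarz)
  finally have "(1 - sigma) * c < norm (G (x k + z *\<^sub>R d k) - G (x k)) * norm (d k)" .
  moreover have "norm (x k + z *\<^sub>R d k - x k) = z * norm (d k)"
    using z(1) by simp
  moreover have "z * norm (d k) \<le> alpha k / rho * norm (d k)"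
    using z by (intro mult_right_mono) auto
  moreover have "alpha k / rho * norm (d k) \<le> abar * norm (d k)"
    using z by (intro mult_right_mono) auto
  ultimately show thesis
    by (intro that[of "x k + z *\<^sub>R d k"]) linarith+
qed

lemma step_size_bounded_below:
  assumes level_bounded: "bounded {z. f z \<le> f (x 0)}"
    and "0 \<le> dmax" and d_bounded: "\<And>k. running k \<Longrightarrow> norm (d k) \<le> dmax" and "0 < c"
  obtains a where "0 < a" "\<And>k. running k \<Longrightarrow> G (x k) \<bullet> d k \<le> - c \<Longrightarrow> a \<le> alpha k"
proof -
  obtain R where R: "\<And>z. f z \<le> f (x 0) \<Longrightarrow> norm z \<le> R"
    using level_bounded by (auto simp: bounded_iff)
  \<comment> \<open>\<open>K\<close> contains every iterate and every trial point \<open>x k + z *\<^sub>R d k\<close> with \<open>z \<le> abar\<close>.\<close>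
  define K where "K = cball (0::'a) (R + abar * dmax)"
  define e where "e = (1 - sigma) * c / (dmax + 1)"
  have "uniformly_continuous_on K G"
    unfolding K_def
    by (intro compact_uniformly_continuous continuous_on_subset[OF continuous_gradient]) auto
  moreover have "0 < e"
    using sigma_bounds \<open>0 < c\<close> \<open>0 \<le> dmax\<close> by (simp add: e_def)
  ultimately obtain \<delta> where "0 < \<delta>"
    and G_close: "\<And>y z. y \<in> K \<Longrightarrow> z \<in> K \<Longrightarrow> dist z y < \<delta> \<Longrightarrow> dist (G z) (G y) < e"
    unfolding uniformly_continuous_on_def by metis
  have "min abar (rho * \<delta> / (dmax + 1)) \<le> alpha k" if k: "running k" "G (x k) \<bullet> d k \<le> - c" for k
  proof (rule ccontr)
    assume "\<not> ?thesis"
    then have "alpha k < abar" and "alpha k < rho * \<delta> / (dmax + 1)"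
      by auto
    then have small: "alpha k / rho * dmax < \<delta>"
      using rho_bounds \<open>0 \<le> dmax\<close> alpha_pos[OF \<open>running k\<close>] by (simp add: field_simps)
    obtain y where y: "norm (y - x k) \<le> alpha k / rho * norm (d k)"
        "norm (y - x k) \<le> abar * norm (d k)"
        and variation: "(1 - sigma) * c < norm (G y - G (x k)) * norm (d k)"
      using rejected_trial_gradient_variation[OF k(1) \<open>alpha k < abar\<close> k(2)] by blast
    have d_k: "norm (d k) \<le> dmax"
      using d_bounded[OF \<open>running k\<close>] .
    have "norm (x k) \<le> R"
      using R merit_le_initial \<open>running k\<close> by simp
    moreover have "abar * norm (d k) \<le> abar * dmax" "0 \<le> abar * dmax"
      using abar_pos d_k \<open>0 \<le> dmax\<close> by simp_all
    ultimately have "x k \<in> K" "y \<in> K"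
      using y(2) norm_triangle_ineq[of "x k" "y - x k"] by (simp_all add: K_def)
    moreover have "alpha k / rho * norm (d k) \<le> alpha k / rho * dmax"
      using alpha_pos[OF \<open>running k\<close>] rho_bounds d_k by (intro mult_left_mono) auto
    then have "dist y (x k) < \<delta>"
      using y(1) small by (simp add: dist_norm)
    ultimately have "norm (G y - G (x k)) < e"
      using G_close by (simp add: dist_norm)
    then have "norm (G y - G (x k)) * norm (d k) \<le> e * dmax"
      using \<open>0 < e\<close> by (intro mult_mono[OF _ d_k]) simp_all
    also have "\<dots> < (1 - sigma) * c"
      using \<open>0 < e\<close> \<open>0 \<le> dmax\<close> by (simp add: e_def field_simps)
    finally show False
      using variation by simp
  qed
  moreover have "0 < min abar (rho * \<delta> / (dmax + 1))"
    using abar_pos rho_bounds \<open>0 < \<delta>\<close> \<open>0 \<le> dmax\<close> by simp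
  ultimately show thesis
    using that by blast
qed

context
  assumes never_stopped: "\<And>k. \<not> stopped k"
    and merit_bdd_below: "bdd_below (range f)"
begin

lemma running_always: "running k"
  using never_stopped by simp

lemma reference_convergent: "convergent D"
proof -
  obtain m where "\<And>z. m \<le> f z"
    using merit_bdd_below by (auto simp: bdd_below_def)
  then have "\<forall>k. m \<le> D k"
    using merit_le_reference never_stopped order_trans by blast
  moreover have "decseq D"
    using reference_antimono never_stopped by (simp add: decseq_Suc_iff)
  ultimately show ?thesis
    by (metis decseq_convergent convergentI)
qed

lemma reference_step_tendsto_zero: "(\<lambda>k. D k - D (Suc k)) \<longlonglongrightarrow> 0"
proof -
  have "D \<longlonglongrightarrow> lim D"
    using reference_convergent by (simp add: convergent_LIMSEQ_iff)
  from tendsto_diff[OF this LIMSEQ_Suc[OF this]] show ?thesis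
    by simp
qed

lemma merit_tendsto_lim_reference: "(\<lambda>k. f (x k)) \<longlonglongrightarrow> lim D"
proof -
  have D: "D \<longlonglongrightarrow> lim D"
    using reference_convergent by (simp add: convergent_LIMSEQ_iff)
  have "(\<lambda>k. D k - (D k - D (Suc k)) / (1 - theta_max)) \<longlonglongrightarrow> lim D - 0 / (1 - theta_max)"
    using theta_bounds(2) by (intro tendsto_intros D reference_step_tendsto_zero) simp
  then have lower_limit: "(\<lambda>k. D k - (D k - D (Suc k)) / (1 - theta_max)) \<longlonglongrightarrow> lim D"
    by simp
  have lower: "D k - (D k - D (Suc k)) / (1 - theta_max) \<le> f (x (Suc k))" for k
  proof -
    have "D k - f (x (Suc k)) \<le> (D k - D (Suc k)) / (1 - theta_max)"
      using reference_decrease(1)[OF running_always] theta_bounds(2)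
      by (simp add: pos_le_divide_eq mult.commute)
    then show ?thesis
      by linarith
  qed
  have upper: "f (x (Suc k)) \<le> D (Suc k)" for k
    using merit_le_reference never_stopped by simp
  have "(\<lambda>k. f (x (Suc k))) \<longlonglongrightarrow> lim D"
    by (rule tendsto_sandwich[OF always_eventually always_eventually lower_limit LIMSEQ_Suc[OF D]])
      (use lower upper in blast)+
  then show ?thesis
    by (rule LIMSEQ_imp_Suc)
qed

lemma armijo_decrease_tendsto_zero: "(\<lambda>k. alpha k * (G (x k) \<bullet> d k)) \<longlonglongrightarrow> 0"
proof -
  define C where "C = (1 - theta_max) * sigma"
  have "0 < C"
    using theta_bounds(2) sigma_bounds by (simp add: C_def)
  have "(\<lambda>k. - ((D k - D (Suc k)) / C)) \<longlonglongrightarrow> - (0 / C)"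
    using \<open>0 < C\<close> by (intro tendsto_intros reference_step_tendsto_zero) simp
  then have lower_limit: "(\<lambda>k. - ((D k - D (Suc k)) / C)) \<longlonglongrightarrow> 0"
    by simp
  have lower: "- ((D k - D (Suc k)) / C) \<le> alpha k * (G (x k) \<bullet> d k)" for k
  proof -
    have "C * - (alpha k * (G (x k) \<bullet> d k)) \<le> D k - D (Suc k)"
      using reference_decrease(2)[OF running_always] by (simp add: C_def mult_ac)
    then have "- (alpha k * (G (x k) \<bullet> d k)) \<le> (D k - D (Suc k)) / C"
      using \<open>0 < C\<close> by (simp add: pos_le_divide_eq mult.commute)
    then show ?thesis
      by linarith
  qed
  have upper: "alpha k * (G (x k) \<bullet> d k) \<le> 0" for k
    using alpha_pos[OF running_always] descent[OF running_always]
    by (simp add: mult_pos_neg less_imp_le)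
  show ?thesis
    by (rule tendsto_sandwich[OF always_eventually always_eventually lower_limit tendsto_const])
      (use lower upper in blast)+
qed

lemma descent_tendsto_zero:
  assumes "bounded {z. f z \<le> f (x 0)}" and "0 \<le> dmax" and "\<And>k. norm (d k) \<le> dmax"
  shows "(\<lambda>k. G (x k) \<bullet> d k) \<longlonglongrightarrow> 0"
proof (rule order_tendstoI)
  fix c :: real
  assume "0 < c"
  show "\<forall>\<^sub>F k in sequentially. G (x k) \<bullet> d k < c"
    using descent[OF running_always] \<open>0 < c\<close> by (intro always_eventually) (metis order.strict_trans)
next
  fix a :: real
  assume "a < 0"
  then obtain s where "0 < s" and s: "\<And>k. G (x k) \<bullet> d k \<le> a \<Longrightarrow> s \<le> alpha k"
    using step_size_bounded_below[OF assms(1,2) _, of "- a"] assms(3) running_always by auto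
  have "s * a < 0"
    using \<open>0 < s\<close> \<open>a < 0\<close> by (simp add: mult_pos_neg)
  then have "\<forall>\<^sub>F k in sequentially. s * a < alpha k * (G (x k) \<bullet> d k)"
    by (rule order_tendstoD(1)[OF armijo_decrease_tendsto_zero])
  then show "\<forall>\<^sub>F k in sequentially. a < G (x k) \<bullet> d k"
  proof (rule eventually_mono)
    fix k
    assume decrease: "s * a < alpha k * (G (x k) \<bullet> d k)"
    show "a < G (x k) \<bullet> d k"
    proof (rule ccontr)
      assume "\<not> a < G (x k) \<bullet> d k"
      then have "alpha k * (G (x k) \<bullet> d k) \<le> s * (G (x k) \<bullet> d k)"
        using s[of k] \<open>a < 0\<close> by (intro mult_right_mono_neg) auto
      also have "\<dots> \<le> s * a"
        using \<open>\<not> a < G (x k) \<bullet> d k\<close> \<open>0 < s\<close> by (intro mult_left_mono) auto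
      finally show False
        using decrease by simp
    qed
  qed
qed

end

end

section \<open>The LMLS iteration\<close>

lemma stationary_limit_point:
  assumes "continuous_on UNIV G" and "(\<lambda>k. norm (G (x k))) \<longlonglongrightarrow> 0"
    and "strict_mono r" and "(x \<circ> r) \<longlonglongrightarrow> y"
  shows "G y = 0"
proof -
  have "(\<lambda>k. G (x (r k))) \<longlonglongrightarrow> G y"
    using assms(1,4) continuous_on_tendsto_compose[of UNIV G "x \<circ> r"] by (simp add: o_def)
  moreover have "(\<lambda>k. G (x (r k))) \<longlonglongrightarrow> 0"
    using LIMSEQ_subseq_LIMSEQ[OF assms(2,3)] by (simp add: o_def tendsto_norm_zero_iff)
  ultimately show ?thesis
    by (rule LIMSEQ_unique)
qed

locale lmls =
  fixes h :: "real^'m::finite \<Rightarrow> real^'n::finite" and J :: "real^'m \<Rightarrow> real^'m^'n"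
    and x d :: "nat \<Rightarrow> real^'m" and D mu alpha xi omega theta :: "nat \<Rightarrow> real"
    and eps abar rho sigma eta L0 xi_min xi_max omega_min omega_max theta_max :: real
  assumes h_derivative: "\<And>z. (h has_derivative (\<lambda>v. J z *v v)) (at z)"
    and continuous_J: "continuous_on UNIV J"
    and level_set_bounded: "bounded {z. psi h z \<le> psi h (x 0)}"
    and L0_pos: "0 < L0"
    and mnorm_gradh_le_L0: "\<And>z. psi h z \<le> psi h (x 0) \<Longrightarrow> mnorm (gradh J z) \<le> L0"
    and eps_pos: "0 < eps" and eta_pos: "0 < eta"
    and abar_positive: "0 < abar" and rho_range: "0 < rho" "rho < 1"
    and sigma_range: "0 < sigma" "sigma < 1"
    and xi_range: "\<And>k. xi_min \<le> xi k \<and> xi k \<le> xi_max"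
    and omega_range: "\<And>k. omega_min \<le> omega k \<and> omega k \<le> omega_max"
    and regularization_weights: "0 \<le> xi_min" "0 \<le> omega_min" "0 < xi_min + omega_min"
    and theta_range: "\<And>k. 0 \<le> theta k \<and> theta k \<le> theta_max" "theta_max < 1"
    and D_0: "D 0 = psi h (x 0)"
    and lmls_step: "\<And>k. (\<forall>j\<le>k. \<not> (norm (h (x j)) \<le> eps \<or> norm (gradpsi h J (x j)) \<le> eps)) \<Longrightarrow>
        mu k = xi k * norm (h (x k)) powr eta + omega k * norm (gradpsi h J (x k)) powr eta
      \<and> (gradh J (x k) ** transpose (gradh J (x k)) + mat (mu k)) *v d k = - gradpsi h J (x k)
      \<and> alpha k = rho ^ (LEAST l. psi h (x k + (rho ^ l * abar) *\<^sub>R d k)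
                        \<le> D k + sigma * rho ^ l * abar * (gradpsi h J (x k) \<bullet> d k)) * abar
      \<and> x (Suc k) = x k + alpha k *\<^sub>R d k
      \<and> D (Suc k) = (1 - theta k) * psi h (x (Suc k)) + theta k * D k"
begin

abbreviation stopped :: "nat \<Rightarrow> bool" where
  "stopped k \<equiv> norm (h (x k)) \<le> eps \<or> norm (gradpsi h J (x k)) \<le> eps"

abbreviation mu_min :: real where
  "mu_min \<equiv> (xi_min + omega_min) * eps powr eta"

abbreviation mu_max :: real where
  "mu_max \<equiv> (xi_max + omega_max * L0 powr eta) * norm (h (x 0)) powr eta"

lemma mu_eq:
  "(\<forall>j\<le>k. \<not> stopped j) \<Longrightarrow>
    mu k = xi k * norm (h (x k)) powr eta + omega k * norm (gradpsi h J (x k)) powr eta"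
  using lmls_step by blast

lemma lm_system:
  "(\<forall>j\<le>k. \<not> stopped j) \<Longrightarrow>
    (gradh J (x k) ** transpose (gradh J (x k)) + mat (mu k)) *v d k = - gradpsi h J (x k)"
  using lmls_step by blast

lemma mu_min_le_mu:
  assumes "\<forall>j\<le>k. \<not> stopped j"
  shows "mu_min \<le> mu k"
proof -
  have "eps powr eta \<le> norm (h (x k)) powr eta" "eps powr eta \<le> norm (gradpsi h J (x k)) powr eta"
    using assms eps_pos eta_pos by (auto intro!: powr_mono2)
  then have "xi_min * eps powr eta \<le> xi k * norm (h (x k)) powr eta"
      "omega_min * eps powr eta \<le> omega k * norm (gradpsi h J (x k)) powr eta"
    using xi_range[of k] omega_range[of k] regularization_weights by (auto intro!: mult_mono)
  then show ?thesis
    using mu_eq[OF assms] by (simp add: distrib_right)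
qed

lemma mu_min_pos: "0 < mu_min"
  using regularization_weights eps_pos by simp

lemma mu_pos:
  assumes "\<forall>j\<le>k. \<not> stopped j"
  shows "0 < mu k"
  using mu_min_le_mu[OF assms] mu_min_pos by linarith

sublocale nonmonotone_armijo_search "psi h" "gradpsi h J" stopped x d D alpha theta
  abar rho sigma theta_max
proof unfold_locales
  fix k
  assume running: "\<forall>j\<le>k. \<not> stopped j"
  have "eps < norm (gradpsi h J (x k))"
    using running by auto
  then have "0 < (norm (gradpsi h J (x k)))\<^sup>2 / ((mnorm (gradh J (x k)))\<^sup>2 + mu k)"
    using eps_pos mu_pos[OF running] by (intro divide_pos_pos add_nonneg_pos) auto
  with lm_direction_descent[OF lm_system[OF running] mu_pos[OF running]]
  show "gradpsi h J (x k) \<bullet> d k < 0"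
    by linarith
qed (use psi_has_gradient[OF h_derivative] continuous_on_gradpsi[OF h_derivative continuous_J]
      abar_positive rho_range sigma_range theta_range D_0 lmls_step in auto)

lemma norm_h_le_initial:
  assumes "running k"
  shows "norm (h (x k)) \<le> norm (h (x 0))"
proof -
  have "(norm (h (x k)))\<^sup>2 \<le> (norm (h (x 0)))\<^sup>2"
    using merit_le_initial assms by (simp add: psi_def)
  then show ?thesis
    by (rule power2_le_imp_le) simp
qed

lemma mnorm_gradh_iterate_le: "running k \<Longrightarrow> mnorm (gradh J (x k)) \<le> L0"
  using merit_le_initial mnorm_gradh_le_L0 by simp

lemma norm_gradpsi_le_initial:
  assumes "running k"
  shows "norm (gradpsi h J (x k)) \<le> L0 * norm (h (x 0))"
proof -
  have "norm (gradpsi h J (x k)) \<le> mnorm (gradh J (x k)) * norm (h (x k))"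
    by (rule norm_gradpsi_le)
  also have "\<dots> \<le> L0 * norm (h (x 0))"
    using mnorm_gradh_iterate_le[OF assms] norm_h_le_initial[OF assms] L0_pos
    by (intro mult_mono) auto
  finally show ?thesis .
qed

lemma mu_le_mu_max:
  assumes "running k"
  shows "mu k \<le> mu_max"
proof -
  have "norm (h (x k)) powr eta \<le> norm (h (x 0)) powr eta"
    using norm_h_le_initial[OF assms] eta_pos by (intro powr_mono2) auto
  moreover have "norm (gradpsi h J (x k)) powr eta \<le> L0 powr eta * norm (h (x 0)) powr eta"
    using powr_mono2[OF _ _ norm_gradpsi_le_initial[OF assms], of eta] eta_pos L0_pos
    by (simp add: powr_mult)
  ultimately have "xi k * norm (h (x k)) powr eta \<le> xi_max * norm (h (x 0)) powr eta"
      "omega k * norm (gradpsi h J (x k)) powr eta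
        \<le> omega_max * (L0 powr eta * norm (h (x 0)) powr eta)"
    using xi_range[of k] omega_range[of k] regularization_weights by (auto intro!: mult_mono)
  then show ?thesis
    using mu_eq[OF assms] by (simp add: algebra_simps)
qed

lemma sufficient_descent:
  assumes "running k"
  shows "gradpsi h J (x k) \<bullet> d k \<le> - (1 / (L0\<^sup>2 + mu_max)) * (norm (gradpsi h J (x k)))\<^sup>2"
proof -
  have "(mnorm (gradh J (x k)))\<^sup>2 \<le> L0\<^sup>2"
    using mnorm_gradh_iterate_le[OF assms] mnorm_nonneg by (intro power_mono) auto
  then have "(mnorm (gradh J (x k)))\<^sup>2 + mu k \<le> L0\<^sup>2 + mu_max"
    using mu_le_mu_max[OF assms] by linarith
  moreover have "0 < (mnorm (gradh J (x k)))\<^sup>2 + mu k"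
    using mu_pos[OF assms] by (simp add: add_nonneg_pos)
  ultimately have "(norm (gradpsi h J (x k)))\<^sup>2 / (L0\<^sup>2 + mu_max)
      \<le> (norm (gradpsi h J (x k)))\<^sup>2 / ((mnorm (gradh J (x k)))\<^sup>2 + mu k)"
    by (intro divide_left_mono) auto
  then show ?thesis
    using lm_direction_descent[OF lm_system[OF assms] mu_pos[OF assms]] by simp
qed

lemma direction_bounded:
  assumes "running k"
  shows "norm (d k) \<le> L0 * norm (h (x 0)) / mu_min"
proof -
  have "mu_min * norm (d k) \<le> mu k * norm (d k)"
    using mu_min_le_mu[OF assms] by (simp add: mult_right_mono)
  also have "\<dots> \<le> L0 * norm (h (x 0))"
    using lm_direction_norm_le[OF lm_system[OF assms] mu_pos[OF assms]]
      norm_gradpsi_le_initial[OF assms]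
    by linarith
  finally have "mu_min * norm (d k) \<le> L0 * norm (h (x 0))" .
  with mu_min_pos show ?thesis
    by (simp add: pos_le_divide_eq mult.commute)
qed

lemma gradient_tendsto_zero:
  assumes never_stopped: "\<And>k. \<not> stopped k"
  shows "(\<lambda>k. norm (gradpsi h J (x k))) \<longlonglongrightarrow> 0"
proof -
  define C where "C = L0\<^sup>2 + mu_max"
  have "0 < C"
    using L0_pos regularization_weights xi_range[of 0] omega_range[of 0]
    by (simp add: C_def add_pos_nonneg)
  have "0 \<le> L0 * norm (h (x 0)) / mu_min"
    using L0_pos mu_min_pos by simp
  then have "(\<lambda>k. gradpsi h J (x k) \<bullet> d k) \<longlonglongrightarrow> 0"
    using never_stopped psi_bdd_below level_set_bounded direction_bounded
    by (intro descent_tendsto_zero[where dmax = "L0 * norm (h (x 0)) / mu_min"]) auto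
  then have upper_limit: "(\<lambda>k. C * - (gradpsi h J (x k) \<bullet> d k)) \<longlonglongrightarrow> C * - 0"
    by (intro tendsto_intros)
  have upper: "(norm (gradpsi h J (x k)))\<^sup>2 \<le> C * - (gradpsi h J (x k) \<bullet> d k)" for k
    using sufficient_descent[of k] never_stopped \<open>0 < C\<close> by (simp add: C_def field_simps)
  have "(\<lambda>k. (norm (gradpsi h J (x k)))\<^sup>2) \<longlonglongrightarrow> 0"
    by (rule tendsto_sandwich[OF always_eventually always_eventually tendsto_const])
      (use upper upper_limit in simp_all)
  from tendsto_real_sqrt[OF this] show ?thesis
    by simp
qed

lemma reference_and_merit_converge:
  assumes "\<And>k. \<not> stopped k"
  shows "convergent D \<and> (\<lambda>k. psi h (x k)) \<longlonglongrightarrow> lim D"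
  using reference_convergent[OF assms psi_bdd_below]
    merit_tendsto_lim_reference[OF assms psi_bdd_below] by blast

lemma stops_or_stationary:
  "(\<exists>k. (\<forall>j<k. \<not> stopped j) \<and> stopped k)
   \<or> ((\<lambda>k. norm (gradpsi h J (x k))) \<longlonglongrightarrow> 0
      \<and> (\<forall>y r. strict_mono r \<and> (x \<circ> r) \<longlonglongrightarrow> y \<longrightarrow> gradpsi h J y = 0))"
proof (cases "\<exists>k. stopped k")
  case True
  then have "(\<forall>j<(LEAST k. stopped k). \<not> stopped j) \<and> stopped (LEAST k. stopped k)"
    by (metis (mono_tags, lifting) LeastI not_less_Least)
  then show ?thesis
    by blast
next
  case False
  then have "(\<lambda>k. norm (gradpsi h J (x k))) \<longlonglongrightarrow> 0"
    using gradient_tendsto_zero by blast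
  with stationary_limit_point[OF continuous_on_gradpsi[OF h_derivative continuous_J]] show ?thesis
    by blast
qed

end

theorem theorem1:
  fixes h :: "real^'m::finite \<Rightarrow> real^'n::finite"
    and J :: "real^'m \<Rightarrow> real^'m^'n"
    and x :: "nat \<Rightarrow> real^'m" and d :: "nat \<Rightarrow> real^'m"
    and D mu alpha :: "nat \<Rightarrow> real"
    and xi omega theta :: "nat \<Rightarrow> real"
    and eps abar rho sigma eta delta L L0 :: real
    and xi_min xi_max omega_min omega_max theta_min theta_max :: real
  assumes deriv: "\<And>z. (h has_derivative (\<lambda>v. J z *v v)) (at z)"
    and contJ: "continuous_on UNIV J"
    and Omega_ne: "{z. h z = 0} \<noteq> {}"
    and A1: "\<exists>xs beta r. h xs = 0 \<and> 0 < delta \<and> delta \<le> 1 \<and> beta > 0 \<and> 0 < r \<and> r < 1 \<and>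
              (\<forall>z. norm (z - xs) \<le> r \<longrightarrow> beta * infdist z {y. h y = 0} \<le> norm (h z) powr delta)"
    and A2: "bounded {z. psi h z \<le> psi h (x 0)}"
    and A3: "\<And>y z. mnorm (gradh J y - gradh J z) \<le> L * norm (y - z)"
    and L0: "L0 > 0" "\<And>z. psi h z \<le> psi h (x 0) \<Longrightarrow> mnorm (gradh J z) \<le> L0"
    and params: "eps > 0" "abar > 0" "0 < rho" "rho < 1" "0 < sigma" "sigma < 1"
      "0 < eta" "eta < 4 * delta"
      "0 \<le> xi_min" "xi_min \<le> xi_max" "0 \<le> omega_min" "omega_min \<le> omega_max"
      "xi_min + omega_min > 0" "0 \<le> theta_min" "theta_min \<le> theta_max" "theta_max < 1"
    and seqs: "\<And>k. xi_min \<le> xi k \<and> xi k \<le> xi_max"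
      "\<And>k. omega_min \<le> omega k \<and> omega k \<le> omega_max"
      "\<And>k. theta_min \<le> theta k \<and> theta k \<le> theta_max"
    and D0: "D 0 = psi h (x 0)"
    and step: "\<And>k. (\<forall>j\<le>k. \<not> (norm (h (x j)) \<le> eps \<or> norm (gradpsi h J (x j)) \<le> eps)) \<Longrightarrow>
        mu k = xi k * norm (h (x k)) powr eta + omega k * norm (gradpsi h J (x k)) powr eta
      \<and> (gradh J (x k) ** transpose (gradh J (x k)) + mat (mu k)) *v d k = - gradpsi h J (x k)
      \<and> alpha k = rho ^ (LEAST l. psi h (x k + (rho ^ l * abar) *\<^sub>R d k)
                        \<le> D k + sigma * rho ^ l * abar * (gradpsi h J (x k) \<bullet> d k)) * abar
      \<and> x (Suc k) = x k + alpha k *\<^sub>R d k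
      \<and> D (Suc k) = (1 - theta k) * psi h (x (Suc k)) + theta k * D k"
  shows
    "((\<forall>k. \<not> (norm (h (x k)) \<le> eps \<or> norm (gradpsi h J (x k)) \<le> eps)) \<longrightarrow>
        convergent D \<and> (\<lambda>k. psi h (x k)) \<longlonglongrightarrow> lim D)
   \<and> (\<forall>k. (\<forall>j\<le>k. \<not> (norm (h (x j)) \<le> eps \<or> norm (gradpsi h J (x j)) \<le> eps)) \<longrightarrow>
        gradpsi h J (x k) \<bullet> d k \<le>
          - (1 / (L0\<^sup>2 + (xi_max + omega_max * L0 powr eta) * norm (h (x 0)) powr eta))
            * (norm (gradpsi h J (x k)))\<^sup>2)
   \<and> ((\<exists>k. (\<forall>j<k. \<not> (norm (h (x j)) \<le> eps \<or> norm (gradpsi h J (x j)) \<le> eps))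
            \<and> (norm (h (x k)) \<le> eps \<or> norm (gradpsi h J (x k)) \<le> eps))
      \<or> ((\<lambda>k. norm (gradpsi h J (x k))) \<longlonglongrightarrow> 0
         \<and> (\<forall>xb r. strict_mono r \<and> (x \<circ> r) \<longlonglongrightarrow> xb \<longrightarrow> gradpsi h J xb = 0)))"
proof -
  interpret lmls h J x d D mu alpha xi omega theta eps abar rho sigma eta L0
      xi_min xi_max omega_min omega_max theta_max
  proof unfold_locales
    show "0 \<le> theta k \<and> theta k \<le> theta_max" for k
      using seqs(3)[of k] params by auto
  qed (use deriv contJ A2 L0 params seqs(1,2) D0 step in blast)+
  show ?thesis
    using reference_and_merit_converge sufficient_descent stops_or_stationary by blast
qed

end
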